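(* If $P$ is a generic set of $n>5$ points in the plane, then $\operatorname{cr}(P)\ge 1$.
   Context: A finite planar point set is in general position if no three of its points are collinear. It is generic if it is in general position and every subset of it has a unique (Euclidean) minimum spanning tree (MST); for a generic set $X$, $T_X$ denotes the MST of $X$, drawn with straight-line edges. For disjoint point sets $R,B$ with $R\cup B$ generic, $\operatorname{cr}(R,B)$ denotes the number of crossings between the edges of $T_R$ and the edges of $T_B$. For a generic point set $P$, $\operatorname{cr}(P)=\max \operatorname{cr}(R,B)$, the maximum over all partitions $P=R\cup B$ into two disjoint sets. *)

theory Defs
  imports "HOL-Analysis.Analysis"
begin

type_synonym point = "real ^ 2"

definition all_edges :: "point set \<Rightarrow> point set set" where
  "all_edges X = {{x, y} | x y. x \<in> X \<and> y \<in> X \<and> x \<noteq> y}"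

text \<open>Euclidean length of an edge {x,y} (well defined since dist is symmetric).\<close>
definition edge_len :: "point set \<Rightarrow> real" where
  "edge_len e = (SOME d. \<exists>x y. e = {x, y} \<and> d = dist x y)"

definition graph_connected :: "point set \<Rightarrow> point set set \<Rightarrow> bool" where
  "graph_connected X T \<longleftrightarrow>
     (\<forall>x\<in>X. \<forall>y\<in>X. (x, y) \<in> ({(a, b). {a, b} \<in> T})\<^sup>*)"

definition spanning_tree :: "point set \<Rightarrow> point set set \<Rightarrow> bool" where
  "spanning_tree X T \<longleftrightarrow> T \<subseteq> all_edges X \<and> graph_connected X T \<and> card T = card X - 1"

definition tree_weight :: "point set set \<Rightarrow> real" where
  "tree_weight T = (\<Sum>e\<in>T. edge_len e)"

definition is_mst :: "point set \<Rightarrow> point set set \<Rightarrow> bool" where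
  "is_mst X T \<longleftrightarrow> spanning_tree X T \<and>
     (\<forall>T'. spanning_tree X T' \<longrightarrow> tree_weight T \<le> tree_weight T')"

definition general_position :: "point set \<Rightarrow> bool" where
  "general_position P \<longleftrightarrow>
     (\<forall>a\<in>P. \<forall>b\<in>P. \<forall>c\<in>P. a \<noteq> b \<and> a \<noteq> c \<and> b \<noteq> c \<longrightarrow> \<not> collinear {a, b, c})"

definition generic :: "point set \<Rightarrow> bool" where
  "generic P \<longleftrightarrow> finite P \<and> general_position P \<and> (\<forall>S\<subseteq>P. \<exists>!T. is_mst S T)"

definition mst :: "point set \<Rightarrow> point set set" where
  "mst X = (THE T. is_mst X T)"

text \<open>Number of crossing pairs (edge of T_R, edge of T_B); edges are straight segments
  (convex hull of the two endpoints).\<close>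
definition cr :: "point set \<Rightarrow> point set \<Rightarrow> nat" where
  "cr R B = card {(e, f). e \<in> mst R \<and> f \<in> mst B \<and> convex hull e \<inter> convex hull f \<noteq> {}}"

definition cr_max :: "point set \<Rightarrow> nat" where
  "cr_max P = Max {cr R B | R B. R \<union> B = P \<and> R \<inter> B = {}}"

end

theory Submission
  imports Defs
begin

text \<open>Let ab be a diameter of P. If there are points on both sides of the line ab, colour a and b
  red and all other points blue: the blue MST has an edge crossing the line ab, and since P lies
  in the slab bounded by the perpendiculars to ab through a and b, it crosses the segment ab.

  Otherwise all other points lie on one side of ab; let ac be the hull edge at a. If some point
  lies beyond bc, the red pair {b, c} works in the same way, with the wedge at a in place of the
  slab. Otherwise the at least three remaining points lie inside the triangle abc. We then find a
  red triple u, v, p whose MST is the path u p v (uv being its longest side) with a blue point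
  inside the triangle uvp and one outside; since all blue points lie on the inner side of uv, the
  blue MST leaves the triangle through up or vp. Either some interior point q lies in the triangle
  abp of another interior point p (take u v p = a b p), or the middle one m of three interior
  points seen from b has interior points in both triangles cam and bcm, and one of the angles amc,
  bmc is obtuse.\<close>

text \<open>Twice the signed area of the triangle pqr; positive iff r lies to the left of the directed
  line pq.\<close>

definition orient :: "point \<Rightarrow> point \<Rightarrow> point \<Rightarrow> real" where
  "orient p q r = (q$1 - p$1) * (r$2 - p$2) - (q$2 - p$2) * (r$1 - p$1)"

lemma orient_swap: "orient p q r = - orient q p r"
  by (simp add: orient_def algebra_simps)

lemma orient_swap_right: "orient p q r = - orient p r q"
  by (simp add: orient_def algebra_simps)

lemma orient_rotate: "orient p q r = orient q r p"
  by (simp add: orient_def algebra_simps)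

lemma orient_sum: "orient p q z + orient q r z + orient r p z = orient p q r"
  by (simp add: orient_def algebra_simps)

lemma inner_coords: "inner x y = x$1 * y$1 + x$2 * y$2" for x y :: point
  by (simp add: inner_vec_def sum_2)

lemma dist_square_coords: "(dist x y)\<^sup>2 = (x$1 - y$1)\<^sup>2 + (x$2 - y$2)\<^sup>2" for x y :: point
  by (simp add: dist_vec_def L2_set_def sum_2 dist_real_def)

definition affine_fun :: "('a::real_vector \<Rightarrow> real) \<Rightarrow> bool" where
  "affine_fun f \<longleftrightarrow> (\<forall>x y u. f ((1 - u) *\<^sub>R x + u *\<^sub>R y) = (1 - u) * f x + u * f y)"

lemma affine_fun_orient: "affine_fun (orient p q)"
  by (simp add: affine_fun_def orient_def algebra_simps)

lemma affine_fun_inner_diff: "affine_fun (\<lambda>z. inner (z - a) d)"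
  by (simp add: affine_fun_def algebra_simps)

lemma convex_affine_fun_nonneg: "affine_fun f \<Longrightarrow> convex {z. 0 \<le> f z}"
  unfolding convex_alt affine_fun_def by simp

lemma affine_fun_zero_in_segment:
  assumes f: "affine_fun f" and "0 < f s" "f t \<le> 0"
  shows "\<exists>z\<in>closed_segment s t. f z = 0"
proof -
  define u where "u = f s / (f s - f t)"
  have "0 \<le> u" "u \<le> 1" using assms by (auto simp: u_def field_simps)
  then have "(1 - u) *\<^sub>R s + u *\<^sub>R t \<in> closed_segment s t" by (auto simp: in_segment)
  moreover have "f ((1 - u) *\<^sub>R s + u *\<^sub>R t) = (1 - u) * f s + u * f t"
    using f unfolding affine_fun_def by blast
  moreover have "(1 - u) * f s + u * f t = 0"
    using assms by (simp add: u_def field_simps)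
  ultimately show ?thesis by metis
qed

lemma affine_funs_exit_segment:
  assumes "affine_fun f" "affine_fun g" "0 < f s" "0 < g s" "f t \<le> 0 \<or> g t \<le> 0"
  shows "\<exists>z\<in>closed_segment s t. 0 \<le> f z \<and> 0 \<le> g z \<and> (f z = 0 \<or> g z = 0)"
proof -
  have exit: "\<exists>z\<in>closed_segment s t. 0 \<le> f z \<and> 0 \<le> g z \<and> (f z = 0 \<or> g z = 0)"
    if f: "affine_fun f" and g: "affine_fun g" and "0 < f s" "0 < g s" "f t \<le> 0" for f g
  proof -
    obtain z1 where z1: "z1 \<in> closed_segment s t" "f z1 = 0"
      using affine_fun_zero_in_segment[OF f \<open>0 < f s\<close> \<open>f t \<le> 0\<close>] by blast
    show ?thesis
    proof (cases "0 \<le> g z1")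
      case True
      then show ?thesis using z1 by (intro bexI[of _ z1]) auto
    next
      case False
      then obtain z2 where z2: "z2 \<in> closed_segment s z1" "g z2 = 0"
        using affine_fun_zero_in_segment[OF g \<open>0 < g s\<close>, of z1] by auto
      have "closed_segment s z1 \<subseteq> closed_segment s t"
        using z1(1) by (simp add: subset_closed_segment)
      moreover have "closed_segment s z1 \<subseteq> {z. 0 \<le> f z}"
        using closed_segment_subset[OF _ _ convex_affine_fun_nonneg[OF f]] \<open>0 < f s\<close> z1(2) by simp
      ultimately show ?thesis using z2 by auto
    qed
  qed
  show ?thesis using assms exit[of f g] exit[of g f] by blast
qed

lemma in_closed_segment_if_weights:
  fixes z u v :: "'a::real_vector"
  assumes "0 < d" "0 \<le> \<alpha>" "0 \<le> \<beta>" "\<alpha> + \<beta> = d" "d *\<^sub>R z = \<alpha> *\<^sub>R u + \<beta> *\<^sub>R v"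
  shows "z \<in> closed_segment u v"
proof -
  have "z = inverse d *\<^sub>R (d *\<^sub>R z)" using \<open>0 < d\<close> by simp
  also have "\<dots> = (1 - \<beta> / d) *\<^sub>R u + (\<beta> / d) *\<^sub>R v"
    using assms by (simp add: scaleR_add_right field_simps)
  finally have "z = (1 - \<beta> / d) *\<^sub>R u + (\<beta> / d) *\<^sub>R v" .
  moreover have "0 \<le> \<beta> / d" "\<beta> / d \<le> 1" using assms by auto
  ultimately show ?thesis unfolding in_segment by auto
qed

lemma orient_barycentric:
  "orient u v w *\<^sub>R z = orient v w z *\<^sub>R u + orient w u z *\<^sub>R v + orient u v z *\<^sub>R w"
  unfolding vec_eq_iff forall_2 by (simp add: orient_def algebra_simps)

lemma orient_zero_in_closed_segment:
  assumes "0 < orient u v w" "orient u v z = 0" "0 \<le> orient v w z" "0 \<le> orient w u z"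
  shows "z \<in> closed_segment u v"
  by (rule in_closed_segment_if_weights[where d = "orient u v w"])
    (use assms orient_barycentric[of u v w z] orient_sum[of u v z w] in auto)

lemma inner_diff_weights_sum: "inner (z - b) (a - b) + inner (z - a) (b - a) = (dist a b)\<^sup>2"
  for a b z :: point
  unfolding dist_square_coords inner_coords by (simp add: power2_eq_square algebra_simps)

lemma orient_zero_decomposition:
  assumes "orient a b z = 0"
  shows "(dist a b)\<^sup>2 *\<^sub>R z = inner (z - b) (a - b) *\<^sub>R a + inner (z - a) (b - a) *\<^sub>R b"
proof -
  have "(dist a b)\<^sup>2 * z$1 = inner (z - b) (a - b) * a$1 + inner (z - a) (b - a) * b$1
      - orient a b z * (b$2 - a$2)"
    "(dist a b)\<^sup>2 * z$2 = inner (z - b) (a - b) * a$2 + inner (z - a) (b - a) * b$2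
      + orient a b z * (b$1 - a$1)"
    unfolding dist_square_coords inner_coords orient_def by (simp_all add: power2_eq_square algebra_simps)
  then show ?thesis unfolding vec_eq_iff forall_2 using assms by simp
qed

lemma collinear_if_orient_zero:
  assumes "orient a b c = 0"
  shows "collinear {a, b, c}"
proof (cases "a = b")
  case True
  then show ?thesis by simp
next
  case False
  define d where "d = (dist a b)\<^sup>2"
  have "d \<noteq> 0" using False by (simp add: d_def)
  have "c = inverse d *\<^sub>R (d *\<^sub>R c)" using \<open>d \<noteq> 0\<close> by simp
  also have "\<dots> = (inner (c - b) (a - b) / d) *\<^sub>R a + (inner (c - a) (b - a) / d) *\<^sub>R b"
    using orient_zero_decomposition[OF assms] by (simp add: d_def scaleR_add_right field_simps)
  finally have "c = (inner (c - b) (a - b) / d) *\<^sub>R a + (inner (c - a) (b - a) / d) *\<^sub>R b" .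
  moreover have "inner (c - b) (a - b) / d + inner (c - a) (b - a) / d = 1"
    using inner_diff_weights_sum[of c b a] \<open>d \<noteq> 0\<close> by (simp add: d_def add_divide_distrib[symmetric])
  ultimately have "c \<in> affine hull {a, b}"
    unfolding affine_hull_2 by blast
  then show ?thesis by (rule affine_hull_3_imp_collinear)
qed

lemma in_closed_segment_if_between:
  assumes "a \<noteq> b" "orient a b z = 0" "0 \<le> inner (z - a) (b - a)" "0 \<le> inner (z - b) (a - b)"
  shows "z \<in> closed_segment a b"
  by (rule in_closed_segment_if_weights[where d = "(dist a b)\<^sup>2"])
    (use assms orient_zero_decomposition inner_diff_weights_sum in auto)

lemma segment_leaves_triangle:
  assumes "0 < orient u v s" "0 < orient v p s" "0 < orient p u s"
    and "0 \<le> orient u v t" "\<not> (0 < orient v p t \<and> 0 < orient p u t)"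
  shows "closed_segment s t \<inter> closed_segment v p \<noteq> {} \<or>
    closed_segment s t \<inter> closed_segment p u \<noteq> {}"
proof -
  have uvp: "0 < orient u v p" using assms orient_sum[of u v s p] by linarith
  obtain z where z: "z \<in> closed_segment s t" "0 \<le> orient v p z" "0 \<le> orient p u z"
    "orient v p z = 0 \<or> orient p u z = 0"
    using affine_funs_exit_segment[OF affine_fun_orient affine_fun_orient, of v p s p u t] assms
    by force
  have "closed_segment s t \<subseteq> {z. 0 \<le> orient u v z}"
    using assms by (intro closed_segment_subset convex_affine_fun_nonneg affine_fun_orient) auto
  with z have "0 \<le> orient u v z" by blast
  from z(4) show ?thesis
  proof
    assume "orient v p z = 0"
    then have "z \<in> closed_segment v p"
      using orient_zero_in_closed_segment[of v p u z] uvp z \<open>0 \<le> orient u v z\<close>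
        orient_rotate[of u v p]
      by simp
    then show ?thesis using z(1) by blast
  next
    assume "orient p u z = 0"
    then have "z \<in> closed_segment p u"
      using orient_zero_in_closed_segment[of p u v z] uvp z \<open>0 \<le> orient u v z\<close>
        orient_rotate[of p u v] orient_rotate[of u v p]
      by simp
    then show ?thesis using z(1) by blast
  qed
qed

lemma inner_diff_nonneg_if_dist_le:
  fixes a b w :: point
  assumes "dist w b \<le> dist a b"
  shows "0 \<le> inner (w - a) (b - a)"
proof -
  have "2 * inner (w - a) (b - a) = (dist w a)\<^sup>2 + ((dist a b)\<^sup>2 - (dist w b)\<^sup>2)"
    unfolding dist_square_coords inner_coords by (simp add: power2_eq_square algebra_simps)
  moreover have "(dist w b)\<^sup>2 \<le> (dist a b)\<^sup>2" using assms by (simp add: power_mono)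
  ultimately show ?thesis using zero_le_power2[of "dist w a"] by linarith
qed

lemma interior_point_longest_side:
  assumes "0 < orient b c y" "0 < orient c a y" "0 < orient a b y"
  shows "(dist c y < dist c a \<and> dist a y < dist c a) \<or> (dist b y < dist b c \<and> dist c y < dist b c)"
proof -
  define p1 where "p1 = inner (a - y) (c - y)"
  define p2 where "p2 = inner (b - y) (c - y)"
  have cosines: "(dist c a)\<^sup>2 = (dist c y)\<^sup>2 + (dist a y)\<^sup>2 - 2 * p1"
    "(dist b c)\<^sup>2 = (dist b y)\<^sup>2 + (dist c y)\<^sup>2 - 2 * p2"
    unfolding p1_def p2_def dist_square_coords inner_coords by (simp_all add: power2_eq_square algebra_simps)
  \<comment> \<open>the barycentric identity for y, paired with c - y\<close>
  have weights: "orient b c y * p1 + orient c a y * p2 + orient a b y * (dist c y)\<^sup>2 = 0"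
    unfolding p1_def p2_def dist_square_coords inner_coords orient_def by (simp add: power2_eq_square algebra_simps)
  have "c \<noteq> y" using assms(1) by (auto simp: orient_def)
  then have "0 < (dist c y)\<^sup>2" by simp
  have "p1 < 0 \<or> p2 < 0"
  proof (rule ccontr)
    assume "\<not> (p1 < 0 \<or> p2 < 0)"
    then have "0 \<le> orient b c y * p1" "0 \<le> orient c a y * p2" using assms by simp_all
    moreover have "0 < orient a b y * (dist c y)\<^sup>2" using assms \<open>0 < (dist c y)\<^sup>2\<close> by simp
    ultimately show False using weights by linarith
  qed
  then show ?thesis
  proof
    assume "p1 < 0"
    then have "(dist c y)\<^sup>2 < (dist c a)\<^sup>2" "(dist a y)\<^sup>2 < (dist c a)\<^sup>2"
      using cosines zero_le_power2[of "dist c y"] zero_le_power2[of "dist a y"] by linarith+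
    then show ?thesis by (auto dest: power2_less_imp_less)
  next
    assume "p2 < 0"
    then have "(dist b y)\<^sup>2 < (dist b c)\<^sup>2" "(dist c y)\<^sup>2 < (dist b c)\<^sup>2"
      using cosines zero_le_power2[of "dist b y"] zero_le_power2[of "dist c y"] by linarith+
    then show ?thesis by (auto dest: power2_less_imp_less)
  qed
qed

lemma interior_point_separates_vertices:
  assumes "0 < orient a b m" "0 < orient b c m" "0 < orient c a m"
  shows "0 < orient m q a \<Longrightarrow> 0 < orient m q b \<Longrightarrow> orient m q c < 0"
    and "orient m q a < 0 \<Longrightarrow> orient m q b < 0 \<Longrightarrow> 0 < orient m q c"
proof -
  \<comment> \<open>the weights of a, b, c are the barycentric coordinates of m, and orient m q is linear\<close>
  have identity: "orient b c m * orient m q a + orient c a m * orient m q b + orient a b m * orient m q c = 0"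
    by (simp add: orient_def algebra_simps)
  show "orient m q c < 0" if "0 < orient m q a" "0 < orient m q b"
  proof -
    have "0 < orient b c m * orient m q a" "0 < orient c a m * orient m q b"
      using assms that by simp_all
    then have "orient a b m * orient m q c < 0" using identity by linarith
    then show ?thesis using assms(1) by (simp add: mult_less_0_iff)
  qed
  show "0 < orient m q c" if "orient m q a < 0" "orient m q b < 0"
  proof -
    have "orient b c m * orient m q a < 0" "orient c a m * orient m q b < 0"
      using assms that by (simp_all add: mult_less_0_iff)
    then have "0 < orient a b m * orient m q c" using identity by linarith
    then show ?thesis using assms(1) by (simp add: zero_less_mult_iff)
  qed
qed

lemma exists_hull_neighbour:
  assumes "finite S" "S \<noteq> {}" "a \<noteq> b" "\<And>q. q \<in> S \<Longrightarrow> 0 < orient a b q"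
  shows "\<exists>c\<in>S. \<forall>q\<in>S. 0 \<le> orient c a q"
proof -
  define cot where "cot q = inner (q - a) (b - a) / orient a b q" for q
  define c where "c = arg_min_on cot S"
  have "c \<in> S" and min: "\<And>q. q \<in> S \<Longrightarrow> cot c \<le> cot q"
    using arg_min_if_finite[OF assms(1,2), of cot] unfolding c_def by (auto simp: not_less)
  have "0 \<le> orient c a q" if "q \<in> S" for q
  proof -
    have "inner (c - a) (b - a) * orient a b q \<le> inner (q - a) (b - a) * orient a b c"
      using min[OF that] assms(4)[OF that] assms(4)[OF \<open>c \<in> S\<close>]
      by (simp add: cot_def divide_simps)
    moreover have "orient c a q * (dist a b)\<^sup>2
        = inner (q - a) (b - a) * orient a b c - inner (c - a) (b - a) * orient a b q"
      unfolding dist_square_coords inner_coords orient_def by (simp add: power2_eq_square algebra_simps)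
    ultimately have "0 \<le> orient c a q * (dist a b)\<^sup>2" by linarith
    moreover have "0 < (dist a b)\<^sup>2" using assms(3) by simp
    ultimately show ?thesis by (simp add: zero_le_mult_iff)
  qed
  then show ?thesis using \<open>c \<in> S\<close> by blast
qed

lemma antisymmetric_three_point_switch:
  fixes r :: "'a \<Rightarrow> 'a \<Rightarrow> real"
  assumes antisym: "\<And>x y. r y x = - r x y"
    and "r p1 p2 \<noteq> 0" "r p1 p3 \<noteq> 0" "r p2 p3 \<noteq> 0"
  shows "\<exists>m\<in>{p1, p2, p3}. \<exists>x\<in>{p1, p2, p3}. \<exists>z\<in>{p1, p2, p3}. 0 < r m x \<and> r m z < 0"
proof -
  have switch: "?thesis" if "0 < r m x" "r m z < 0" "m \<in> {p1, p2, p3}" "x \<in> {p1, p2, p3}"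
    "z \<in> {p1, p2, p3}" for m x z
    using that by blast
  have r21: "r p2 p1 = - r p1 p2" and r31: "r p3 p1 = - r p1 p3" and r32: "r p3 p2 = - r p2 p3"
    by (rule antisym)+
  consider "0 < r p1 p2" "r p1 p3 < 0" | "r p1 p2 < 0" "0 < r p1 p3"
    | "0 < r p1 p2" "0 < r p1 p3" "0 < r p2 p3" | "0 < r p1 p2" "0 < r p1 p3" "r p2 p3 < 0"
    | "r p1 p2 < 0" "r p1 p3 < 0" "0 < r p2 p3" | "r p1 p2 < 0" "r p1 p3 < 0" "r p2 p3 < 0"
    using assms(2-4) by linarith
  then show ?thesis
  proof cases
    case 1 then show ?thesis by (intro switch[of p1 p2 p3]) auto
  next
    case 2 then show ?thesis by (intro switch[of p1 p3 p2]) auto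
  next
    case 3 then show ?thesis using r21 by (intro switch[of p2 p3 p1]) auto
  next
    case 4 then show ?thesis using r31 r32 by (intro switch[of p3 p2 p1]) auto
  next
    case 5 then show ?thesis using r31 r32 by (intro switch[of p3 p1 p2]) auto
  next
    case 6 then show ?thesis using r21 by (intro switch[of p2 p1 p3]) auto
  qed
qed

lemma generic_orient_nonzero:
  assumes "generic P" "x \<in> P" "y \<in> P" "z \<in> P" "x \<noteq> y" "x \<noteq> z" "y \<noteq> z"
  shows "orient x y z \<noteq> 0"
proof
  assume "orient x y z = 0"
  then have "collinear {x, y, z}" by (rule collinear_if_orient_zero)
  with assms show False unfolding generic_def general_position_def by blast
qed

lemma edge_len_doubleton: "edge_len {x, y} = dist x y"
  unfolding edge_len_def
  by (rule someI2[of _ "dist x y"]) (auto simp: doubleton_eq_iff dist_commute)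

lemma is_mst_mst: "generic P \<Longrightarrow> S \<subseteq> P \<Longrightarrow> is_mst S (mst S)"
  unfolding generic_def mst_def by (metis theI')

lemma mst_eqI: "generic P \<Longrightarrow> S \<subseteq> P \<Longrightarrow> is_mst S T \<Longrightarrow> mst S = T"
  unfolding generic_def mst_def by (metis the1_equality)

lemma mst_edge_subset:
  assumes "generic P" "S \<subseteq> P" "e \<in> mst S"
  shows "e \<subseteq> S"
proof -
  have "mst S \<subseteq> all_edges S" using is_mst_mst[OF assms(1,2)] by (simp add: is_mst_def spanning_tree_def)
  then show ?thesis using assms(3) unfolding all_edges_def by blast
qed

lemma finite_mst:
  assumes "generic P" "S \<subseteq> P"
  shows "finite (mst S)"
proof (rule finite_subset)
  show "mst S \<subseteq> Pow S" using mst_edge_subset[OF assms] by blast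
  show "finite (Pow S)" using assms finite_subset unfolding generic_def by auto
qed

lemma mst_doubleton:
  assumes "generic P" "{u, v} \<subseteq> P" "u \<noteq> v"
  shows "mst {u, v} = {{u, v}}"
proof (rule mst_eqI[OF assms(1,2)])
  have edges: "all_edges {u, v} = {{u, v}}"
    using assms(3) unfolding all_edges_def by (auto simp: doubleton_eq_iff)
  have "spanning_tree {u, v} T \<longleftrightarrow> T = {{u, v}}" for T
  proof
    assume "spanning_tree {u, v} T"
    then have "T \<subseteq> {{u, v}}" "card T = 1" using assms(3) edges by (auto simp: spanning_tree_def)
    then show "T = {{u, v}}" by (metis subset_singletonD zero_neq_one card.empty)
  next
    assume "T = {{u, v}}"
    then show "spanning_tree {u, v} T" using assms(3) edges
      unfolding spanning_tree_def graph_connected_def by (auto simp: insert_commute intro: r_into_rtrancl)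
  qed
  then show "is_mst {u, v} {{u, v}}" unfolding is_mst_def by simp
qed

lemma mst_three_points:
  assumes "generic P" "{u, v, p} \<subseteq> P" "u \<noteq> v" "u \<noteq> p" "v \<noteq> p"
    and "dist u p \<le> dist u v" "dist v p \<le> dist u v"
  shows "mst {u, v, p} = {{v, p}, {p, u}}"
proof (rule mst_eqI[OF assms(1,2)])
  have edges: "all_edges {u, v, p} = {{u, v}, {v, p}, {p, u}}"
    using assms(3-5) unfolding all_edges_def by (auto simp: insert_commute)
  have distinct: "{u, v} \<noteq> {v, p}" "{u, v} \<noteq> {p, u}" "{v, p} \<noteq> {p, u}"
    using assms(3-5) by (auto simp: doubleton_eq_iff)
  let ?E = "{(x, y). {x, y} \<in> {{v, p}, {p, u}}}"
  have "(v, p) \<in> ?E" "(p, v) \<in> ?E" "(p, u) \<in> ?E" "(u, p) \<in> ?E" by (auto simp: insert_commute)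
  then have "graph_connected {u, v, p} {{v, p}, {p, u}}"
    unfolding graph_connected_def by (auto intro: r_into_rtrancl rtrancl_trans)
  then have tree: "spanning_tree {u, v, p} {{v, p}, {p, u}}"
    using distinct assms(3-5) edges unfolding spanning_tree_def by auto
  have min: "tree_weight {{v, p}, {p, u}} \<le> tree_weight T" if "spanning_tree {u, v, p} T" for T
  proof -
    have "T \<subseteq> {{u, v}, {v, p}, {p, u}}" "card T = 2"
      using that edges assms(3-5) unfolding spanning_tree_def by auto
    then obtain e1 e2 where T: "T = {e1, e2}" "e1 \<noteq> e2"
      "e1 \<in> {{u, v}, {v, p}, {p, u}}" "e2 \<in> {{u, v}, {v, p}, {p, u}}"
      by (auto simp: card_2_iff)
    have "tree_weight T = edge_len e1 + edge_len e2"
      unfolding tree_weight_def T(1) using T(2) by simp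
    moreover have "tree_weight {{v, p}, {p, u}} = dist v p + dist u p"
      unfolding tree_weight_def using distinct(3) by (simp add: edge_len_doubleton dist_commute)
    moreover have "edge_len {u, v} = dist u v" "edge_len {v, p} = dist v p" "edge_len {p, u} = dist u p"
      by (simp_all add: edge_len_doubleton dist_commute)
    ultimately show ?thesis using T(2-4) assms(6,7) by auto
  qed
  show "is_mst {u, v, p} {{v, p}, {p, u}}"
    unfolding is_mst_def by (intro conjI allI impI tree min)
qed

lemma connected_graph_cut_edge:
  assumes "graph_connected X T" "x \<in> X" "y \<in> X" "Q x" "\<not> Q y"
  shows "\<exists>s t. {s, t} \<in> T \<and> Q s \<and> \<not> Q t"
proof -
  have "(x, y) \<in> {(a, b). {a, b} \<in> T}\<^sup>*" using assms(1-3) unfolding graph_connected_def by blast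
  then show ?thesis using assms(4,5) by (induction rule: rtrancl_induct) auto
qed

lemma cr_max_pos_if_mst_crossing:
  assumes g: "generic P" and R: "R \<subseteq> P" and "{x, y} \<in> mst R" "{s, t} \<in> mst (P - R)"
    and "closed_segment x y \<inter> closed_segment s t \<noteq> {}"
  shows "1 \<le> cr_max P"
proof -
  let ?C = "{(e, f). e \<in> mst R \<and> f \<in> mst (P - R) \<and> convex hull e \<inter> convex hull f \<noteq> {}}"
  have "finite ?C"
    using finite_mst[OF g R] finite_mst[OF g, of "P - R"]
    by (auto intro: finite_subset[of _ "mst R \<times> mst (P - R)"])
  moreover have "({x, y}, {s, t}) \<in> ?C" using assms(3-5) by (simp add: segment_convex_hull)
  ultimately have "0 < card ?C" by (subst card_gt_0_iff) blast
  then have "1 \<le> cr R (P - R)" unfolding cr_def by simp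
  also have "cr R (P - R) \<le> cr_max P"
  proof -
    let ?crs = "{cr R' B | R' B. R' \<union> B = P \<and> R' \<inter> B = {}}"
    have "?crs \<subseteq> (\<lambda>R'. cr R' (P - R')) ` Pow P"
    proof
      fix n assume "n \<in> ?crs"
      then obtain R' B where "n = cr R' B" "R' \<union> B = P" "R' \<inter> B = {}" by blast
      then have "B = P - R'" "R' \<in> Pow P" by auto
      then show "n \<in> (\<lambda>R'. cr R' (P - R')) ` Pow P" using \<open>n = cr R' B\<close> by blast
    qed
    moreover have "finite P" using g by (simp add: generic_def)
    ultimately have "finite ?crs" by (meson finite_Pow_iff finite_imageI finite_subset)
    moreover have "cr R (P - R) \<in> ?crs" using R by blast
    ultimately show ?thesis unfolding cr_max_def by (rule Max_ge)
  qed
  finally show ?thesis .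
qed

lemma cr_max_pos_if_mst_separates:
  assumes g: "generic P" and R: "R \<subseteq> P" and "p \<in> P - R" "q \<in> P - R" "Q p" "\<not> Q q"
    and crossing: "\<And>s t. s \<in> P - R \<Longrightarrow> t \<in> P - R \<Longrightarrow> Q s \<Longrightarrow> \<not> Q t \<Longrightarrow>
      \<exists>x y. {x, y} \<in> mst R \<and> closed_segment x y \<inter> closed_segment s t \<noteq> {}"
  shows "1 \<le> cr_max P"
proof -
  have "graph_connected (P - R) (mst (P - R))"
    using is_mst_mst[OF g, of "P - R"] unfolding is_mst_def spanning_tree_def by blast
  then obtain s t where st: "{s, t} \<in> mst (P - R)" "Q s" "\<not> Q t"
    using connected_graph_cut_edge[of "P - R" _ p q Q] assms(3-6) by blast
  moreover have "s \<in> P - R" "t \<in> P - R" using mst_edge_subset[OF g _ st(1)] by auto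
  ultimately obtain x y where "{x, y} \<in> mst R" "closed_segment x y \<inter> closed_segment s t \<noteq> {}"
    using crossing by blast
  then show ?thesis using cr_max_pos_if_mst_crossing[OF g R] st(1) by blast
qed

lemma cr_max_pos_if_edge_separates:
  assumes g: "generic P" and "u \<in> P" "v \<in> P" "u \<noteq> v"
    and "p \<in> P - {u, v}" "q \<in> P - {u, v}" "0 < orient u v p" "orient u v q \<le> 0"
    and "convex K" "P - {u, v} \<subseteq> K"
    and on_line: "\<And>z. z \<in> K \<Longrightarrow> orient u v z = 0 \<Longrightarrow> z \<in> closed_segment u v"
  shows "1 \<le> cr_max P"
proof -
  have crossing: "\<exists>x y. {x, y} \<in> mst {u, v} \<and> closed_segment x y \<inter> closed_segment s t \<noteq> {}"
    if st: "s \<in> P - {u, v}" "t \<in> P - {u, v}" "0 < orient u v s" "\<not> 0 < orient u v t" for s t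
  proof -
    obtain z where z: "z \<in> closed_segment s t" "orient u v z = 0"
      using affine_fun_zero_in_segment[OF affine_fun_orient, of u v s t] st(3,4) by auto
    have "closed_segment s t \<subseteq> K" using closed_segment_subset assms(9,10) st(1,2) by blast
    then have "z \<in> closed_segment u v" using z on_line by blast
    then show ?thesis using z(1) mst_doubleton[OF g _ \<open>u \<noteq> v\<close>] assms(2,3) by blast
  qed
  show ?thesis
    by (rule cr_max_pos_if_mst_separates[OF g _ assms(5,6) _ _ crossing]) (use assms in auto)
qed

lemma cr_max_pos_if_triangle_separates:
  assumes g: "generic P" and "{u, v, p} \<subseteq> P" "u \<noteq> v" "u \<noteq> p" "v \<noteq> p"
    and "dist u p \<le> dist u v" "dist v p \<le> dist u v"
    and "q \<in> P - {u, v, p}" "0 < orient v p q" "0 < orient p u q"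
    and "r \<in> P - {u, v, p}" "\<not> (0 < orient v p r \<and> 0 < orient p u r)"
    and side: "\<And>w. w \<in> P - {u, v, p} \<Longrightarrow> 0 < orient u v w"
  shows "1 \<le> cr_max P"
proof -
  have mst: "mst {u, v, p} = {{v, p}, {p, u}}" using mst_three_points assms(1-7) by blast
  have crossing: "\<exists>x y. {x, y} \<in> mst {u, v, p} \<and> closed_segment x y \<inter> closed_segment s t \<noteq> {}"
    if st: "s \<in> P - {u, v, p}" "t \<in> P - {u, v, p}" "0 < orient v p s \<and> 0 < orient p u s"
      "\<not> (0 < orient v p t \<and> 0 < orient p u t)" for s t
  proof -
    have "closed_segment s t \<inter> closed_segment v p \<noteq> {} \<or> closed_segment s t \<inter> closed_segment p u \<noteq> {}"
      using segment_leaves_triangle[of u v s p t] side[OF st(1)] side[OF st(2)] st(3,4) by simp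
    then show ?thesis unfolding mst by (metis Int_commute insertCI)
  qed
  show ?thesis
    by (rule cr_max_pos_if_mst_separates[where Q = "\<lambda>w. 0 < orient v p w \<and> 0 < orient p u w",
          OF g assms(2) assms(8,11) _ _ crossing]) (use assms in auto)
qed

lemma cr_max_pos_if_split_triangle:
  assumes g: "generic P" and "a \<in> P" "b \<in> P" "c \<in> P"
    and inside: "\<And>q. q \<in> P - {a, b, c} \<Longrightarrow> 0 < orient a b q \<and> 0 < orient b c q \<and> 0 < orient c a q"
    and "m \<in> P - {a, b, c}" "x \<in> P - {a, b, c}" "z \<in> P - {a, b, c}"
    and x: "0 < orient a m x" "0 < orient m c x"
    and z: "0 < orient c m z" "0 < orient m b z"
  shows "1 \<le> cr_max P"
proof -
  have m: "0 < orient a b m" "0 < orient b c m" "0 < orient c a m" using inside assms(6) by auto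
  have abc: "0 < orient a b c" using m orient_sum[of a b m c] by linarith
  have "a \<noteq> b" "a \<noteq> c" "b \<noteq> c" using abc by (auto simp: orient_def)
  have "m \<noteq> x" "m \<noteq> z" using x z by (auto simp: orient_def)
  from interior_point_longest_side[where a = a and b = b and c = c and y = m] m
  consider "dist c m < dist c a" "dist a m < dist c a" | "dist b m < dist b c" "dist c m < dist b c"
    by blast
  then show ?thesis
  proof cases
    case 1
    have side: "0 < orient c a w" if "w \<in> P - {c, a, m}" for w
      using that inside abc orient_rotate[of c a b] by (cases "w = b") auto
    show ?thesis
      by (rule cr_max_pos_if_triangle_separates[of P c a m x b])
        (use g 1 side assms(2-4,6,7) x m \<open>m \<noteq> x\<close> \<open>a \<noteq> b\<close> \<open>a \<noteq> c\<close> \<open>b \<noteq> c\<close>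
          orient_swap_right[of a b m] in auto)
  next
    case 2
    have side: "0 < orient b c w" if "w \<in> P - {b, c, m}" for w
      using that inside abc orient_rotate[of a b c] by (cases "w = a") auto
    show ?thesis
      by (rule cr_max_pos_if_triangle_separates[of P b c m z a])
        (use g 2 side assms(2-4,6,8) z m \<open>m \<noteq> z\<close> \<open>a \<noteq> b\<close> \<open>a \<noteq> c\<close> \<open>b \<noteq> c\<close>
          orient_swap_right[of c a m] in auto)
  qed
qed

lemma cr_max_pos_if_no_nested_triangles:
  assumes g: "generic P" and "a \<in> P" "b \<in> P" "c \<in> P"
    and inside: "\<And>q. q \<in> P - {a, b, c} \<Longrightarrow> 0 < orient a b q \<and> 0 < orient b c q \<and> 0 < orient c a q"
    and "3 \<le> card (P - {a, b, c})"
    and not_nested: "\<And>p q. p \<in> P - {a, b, c} \<Longrightarrow> q \<in> P - {a, b, c} \<Longrightarrow>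
      \<not> (0 < orient b p q \<and> 0 < orient p a q)"
  shows "1 \<le> cr_max P"
proof -
  let ?I = "P - {a, b, c}"
  have nz: "orient x y z \<noteq> 0" if "x \<in> P" "y \<in> P" "z \<in> P" "x \<noteq> y" "x \<noteq> z" "y \<noteq> z" for x y z
    using generic_orient_nonzero[OF g that] .
  obtain p1 p2 p3 where p: "p1 \<in> ?I" "p2 \<in> ?I" "p3 \<in> ?I" "p1 \<noteq> p2" "p1 \<noteq> p3" "p2 \<noteq> p3"
  proof -
    obtain S where "S \<subseteq> ?I" "card S = 3" using ex_card[OF \<open>3 \<le> card ?I\<close>] by blast
    then show ?thesis using that by (auto simp: card_3_iff)
  qed
  have "orient b p1 p2 \<noteq> 0" "orient b p1 p3 \<noteq> 0" "orient b p2 p3 \<noteq> 0"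
    using nz p \<open>b \<in> P\<close> by auto
  from antisymmetric_three_point_switch[of "orient b", OF orient_swap_right this]
  obtain m x z where mxz: "m \<in> ?I" "x \<in> ?I" "z \<in> ?I" "0 < orient b m x" "orient b m z < 0"
    using p by blast
  have m: "0 < orient a b m" "0 < orient b c m" "0 < orient c a m" using inside mxz(1) by auto
  have "m \<noteq> x" "m \<noteq> z" using mxz(4,5) by (auto simp: orient_def)
  \<comment> \<open>m cuts abc into the triangles abm, bcm, cam; abm contains no point of the interior
    by \<open>not_nested\<close>, so x lies in cam and z in bcm\<close>
  have "orient m a x < 0"
  proof -
    have "\<not> 0 < orient m a x" using not_nested[OF mxz(1,2)] mxz(4) by blast
    moreover have "orient m a x \<noteq> 0" using nz[of m a x] mxz(1,2) \<open>a \<in> P\<close> \<open>m \<noteq> x\<close> by auto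
    ultimately show ?thesis by linarith
  qed
  then have "orient m x c < 0"
    using interior_point_separates_vertices(1)[OF m, of x] mxz(4)
      orient_swap_right[of m a x] orient_rotate[of b m x] by linarith
  have "0 < orient m a z"
  proof -
    have "0 < orient b z m" using mxz(5) orient_swap_right[of b m z] by linarith
    then have "\<not> 0 < orient z a m" using not_nested[OF mxz(3,1)] by blast
    moreover have "orient z a m \<noteq> 0" using nz[of z a m] mxz(1,3) \<open>a \<in> P\<close> \<open>m \<noteq> z\<close> by auto
    ultimately show ?thesis using orient_rotate[of z a m] orient_swap[of a m z] by linarith
  qed
  then have "0 < orient m z c"
    using interior_point_separates_vertices(2)[OF m, of z] mxz(5)
      orient_swap_right[of m a z] orient_rotate[of b m z] by linarith
  show ?thesis
  proof (rule cr_max_pos_if_split_triangle[OF g assms(2-4) inside mxz(1-3)])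
    show "0 < orient a m x" "0 < orient m c x"
      using \<open>orient m a x < 0\<close> \<open>orient m x c < 0\<close> orient_swap[of m a x] orient_swap_right[of m c x]
      by linarith+
    show "0 < orient c m z" "0 < orient m b z"
      using \<open>0 < orient m z c\<close> mxz(5) orient_rotate[of c m z] orient_swap[of b m z] by linarith+
  qed
qed

lemma cr_max_pos_if_inside_triangle:
  assumes g: "generic P" and "a \<in> P" "b \<in> P" "c \<in> P"
    and diam: "\<And>x y. x \<in> P \<Longrightarrow> y \<in> P \<Longrightarrow> dist x y \<le> dist a b"
    and inside: "\<And>q. q \<in> P - {a, b, c} \<Longrightarrow> 0 < orient a b q \<and> 0 < orient b c q \<and> 0 < orient c a q"
    and "3 \<le> card (P - {a, b, c})"
  shows "1 \<le> cr_max P"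
proof (cases "\<exists>p\<in>P - {a, b, c}. \<exists>q\<in>P - {a, b, c}. 0 < orient b p q \<and> 0 < orient p a q")
  case True
  then obtain p q where pq: "p \<in> P - {a, b, c}" "q \<in> P - {a, b, c}" "0 < orient b p q" "0 < orient p a q"
    by blast
  have p: "0 < orient a b p" "0 < orient b c p" "0 < orient c a p" using inside pq(1) by auto
  have abc: "0 < orient a b c" using p orient_sum[of a b p c] by linarith
  have "a \<noteq> b" "a \<noteq> c" "b \<noteq> c" using abc by (auto simp: orient_def)
  have "p \<noteq> q" using pq(3) by (auto simp: orient_def)
  have "orient p a c < 0" using p(3) orient_rotate[of c a p] orient_swap[of a p c] by linarith
  have side: "0 < orient a b w" if "w \<in> P - {a, b, p}" for w
    using that inside abc by (cases "w = c") auto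
  show ?thesis
    by (rule cr_max_pos_if_triangle_separates[of P a b p q c])
      (use g pq side diam \<open>orient p a c < 0\<close> \<open>p \<noteq> q\<close> \<open>a \<noteq> b\<close> \<open>a \<noteq> c\<close> \<open>b \<noteq> c\<close>
        \<open>a \<in> P\<close> \<open>b \<in> P\<close> \<open>c \<in> P\<close> in auto)
next
  case False
  then show ?thesis using cr_max_pos_if_no_nested_triangles[OF assms(1-4) inside assms(7)] by blast
qed

lemma cr_max_pos_if_beyond_edge:
  assumes g: "generic P" and "a \<in> P" "b \<in> P" "c \<in> P" "0 < orient a b c"
    and wedge: "\<And>w. w \<in> P - {a, b, c} \<Longrightarrow> 0 \<le> orient c a w \<and> 0 \<le> orient a b w"
    and "q \<in> P - {a, b, c}" "orient b c q < 0"
  shows "1 \<le> cr_max P"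
proof -
  have bca: "0 < orient b c a" using assms(5) orient_rotate[of a b c] by simp
  have "a \<noteq> b" "a \<noteq> c" "b \<noteq> c" using assms(5) by (auto simp: orient_def)
  define K where "K = {z. 0 \<le> orient c a z} \<inter> {z. 0 \<le> orient a b z}"
  have "convex K" unfolding K_def by (intro convex_Int convex_affine_fun_nonneg affine_fun_orient)
  have "P - {b, c} \<subseteq> K"
  proof
    fix w assume w: "w \<in> P - {b, c}"
    show "w \<in> K"
    proof (cases "w = a")
      case True
      then show ?thesis by (simp add: K_def orient_def)
    next
      case False
      then show ?thesis using w wedge by (auto simp: K_def)
    qed
  qed
  have on_line: "z \<in> closed_segment b c" if "z \<in> K" "orient b c z = 0" for z
    using orient_zero_in_closed_segment[of b c a z] bca that by (simp add: K_def)
  show ?thesis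
    by (rule cr_max_pos_if_edge_separates[of P b c a q K])
      (use assms(2-4,7,8) g bca \<open>a \<noteq> b\<close> \<open>a \<noteq> c\<close> \<open>b \<noteq> c\<close> \<open>convex K\<close> \<open>P - {b, c} \<subseteq> K\<close> on_line in auto)
qed

lemma cr_max_pos_if_one_side:
  assumes g: "generic P" and "6 \<le> card P" and "a \<in> P" "b \<in> P" "a \<noteq> b"
    and diam: "\<And>x y. x \<in> P \<Longrightarrow> y \<in> P \<Longrightarrow> dist x y \<le> dist a b"
    and left: "\<And>q. q \<in> P - {a, b} \<Longrightarrow> 0 < orient a b q"
  shows "1 \<le> cr_max P"
proof -
  have "finite P" using g by (simp add: generic_def)
  have "P - {a, b} \<noteq> {}"
  proof
    assume "P - {a, b} = {}"
    then have "card P \<le> card {a, b}" by (intro card_mono) auto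
    also have "\<dots> \<le> 2" by (simp add: card_insert_if)
    finally show False using assms(2) by simp
  qed
  then obtain c where c: "c \<in> P - {a, b}" and hull: "\<And>q. q \<in> P - {a, b} \<Longrightarrow> 0 \<le> orient c a q"
    using exists_hull_neighbour[of "P - {a, b}" a b] \<open>finite P\<close> \<open>a \<noteq> b\<close> left by blast
  have abc: "0 < orient a b c" using left c .
  show ?thesis
  proof (cases "\<exists>q\<in>P - {a, b, c}. orient b c q < 0")
    case True
    then obtain q where q: "q \<in> P - {a, b, c}" "orient b c q < 0" by blast
    have "0 \<le> orient c a w \<and> 0 \<le> orient a b w" if "w \<in> P - {a, b, c}" for w
      using that hull left by (auto simp: less_imp_le)
    then show ?thesis using cr_max_pos_if_beyond_edge[OF g \<open>a \<in> P\<close> \<open>b \<in> P\<close> _ abc _ q] c by blast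
  next
    case False
    have "0 < orient a b q \<and> 0 < orient b c q \<and> 0 < orient c a q" if q: "q \<in> P - {a, b, c}" for q
    proof -
      have "orient b c q \<noteq> 0" "orient c a q \<noteq> 0"
        using generic_orient_nonzero[OF g] q c \<open>a \<in> P\<close> \<open>b \<in> P\<close> by auto
      then show ?thesis using False q left[of q] hull[of q] by force
    qed
    moreover have "card (P - {a, b, c}) = card P - 3"
      using assms(3-5) c \<open>finite P\<close> by (auto simp: card_Diff_subset card_insert_if numeral_3_eq_3)
    ultimately show ?thesis
      using cr_max_pos_if_inside_triangle[OF g \<open>a \<in> P\<close> \<open>b \<in> P\<close> _ diam] c assms(2) by auto
  qed
qed

lemma cr_max_pos_if_two_sides:
  assumes g: "generic P" and "a \<in> P" "b \<in> P" "a \<noteq> b"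
    and diam: "\<And>x y. x \<in> P \<Longrightarrow> y \<in> P \<Longrightarrow> dist x y \<le> dist a b"
    and "p \<in> P - {a, b}" "q \<in> P - {a, b}" "0 < orient a b p" "orient a b q < 0"
  shows "1 \<le> cr_max P"
proof -
  define K where "K = {z. 0 \<le> inner (z - a) (b - a)} \<inter> {z. 0 \<le> inner (z - b) (a - b)}"
  have "convex K" unfolding K_def by (intro convex_Int convex_affine_fun_nonneg affine_fun_inner_diff)
  have "P - {a, b} \<subseteq> K"
  proof
    fix w assume "w \<in> P - {a, b}"
    then have "dist w b \<le> dist a b" "dist w a \<le> dist b a"
      using diam \<open>a \<in> P\<close> \<open>b \<in> P\<close> by (auto simp: dist_commute)
    then show "w \<in> K" by (simp add: K_def inner_diff_nonneg_if_dist_le)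
  qed
  show ?thesis
    by (rule cr_max_pos_if_edge_separates[OF g assms(2-4,6-8) _ \<open>convex K\<close> \<open>P - {a, b} \<subseteq> K\<close>])
      (use assms(9) in_closed_segment_if_between[OF \<open>a \<noteq> b\<close>] in \<open>auto simp: K_def\<close>)
qed

lemma finite_diameter_pair:
  fixes P :: "'a::metric_space set"
  assumes "finite P" "2 \<le> card P"
  obtains a b where "a \<in> P" "b \<in> P" "a \<noteq> b" "\<And>x y. x \<in> P \<Longrightarrow> y \<in> P \<Longrightarrow> dist x y \<le> dist a b"
proof -
  have "P \<noteq> {}" using assms(2) by auto
  then obtain a b where ab: "a \<in> P" "b \<in> P" and diam: "\<And>x y. x \<in> P \<Longrightarrow> y \<in> P \<Longrightarrow> dist x y \<le> dist a b"
    using compact_sup_maxdistance[OF finite_imp_compact[OF assms(1)]] by metis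
  have "a \<noteq> b"
  proof
    assume "a = b"
    then have "card P \<le> 1" using diam assms(1) by (auto simp: card_le_Suc0_iff_eq)
    then show False using assms(2) by simp
  qed
  from ab \<open>a \<noteq> b\<close> diam show ?thesis by (rule that)
qed

theorem theorem2:
  fixes P :: "point set"
  assumes "generic P" and "card P > 5"
  shows "cr_max P \<ge> 1"
proof -
  have "finite P" "2 \<le> card P" using assms by (simp_all add: generic_def)
  then obtain a b where ab: "a \<in> P" "b \<in> P" "a \<noteq> b"
    and diam: "\<And>x y. x \<in> P \<Longrightarrow> y \<in> P \<Longrightarrow> dist x y \<le> dist a b"
    by (metis finite_diameter_pair)
  have "0 < orient a b q \<or> orient a b q < 0" if "q \<in> P - {a, b}" for q
    using generic_orient_nonzero[OF assms(1)] ab that by force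
  then consider (two_sides) p q where "p \<in> P - {a, b}" "q \<in> P - {a, b}" "0 < orient a b p" "orient a b q < 0"
    | (left) "\<And>q. q \<in> P - {a, b} \<Longrightarrow> 0 < orient a b q"
    | (right) "\<And>q. q \<in> P - {a, b} \<Longrightarrow> orient a b q < 0"
    by blast
  then show ?thesis
  proof cases
    case two_sides
    then show ?thesis using cr_max_pos_if_two_sides[OF assms(1) ab diam] by blast
  next
    case left
    then show ?thesis using cr_max_pos_if_one_side[OF assms(1) _ ab diam] assms(2) by simp
  next
    case right
    then have "0 < orient b a q" if "q \<in> P - {b, a}" for q
      using that orient_swap[of b a q] by (simp add: insert_commute)
    then show ?thesis using cr_max_pos_if_one_side[OF assms(1) _ ab(2,1) ab(3)[symmetric]] diam assms(2)
      by (simp add: dist_commute)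
  qed
qed

end
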